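(* Let $\mathbf{F}$ be a field of characteristic $3$, let $\lambda=(\lambda_1,\lambda_2)$ be a partition, $m=\lambda_1-\lambda_2$, and let $g\in\mathbf{N}_0$ with $B(m,g)\not\equiv0\pmod3$. Then in $S_\mathbf{F}(\lambda)$ \[e_{m,g}=B(m,g)\,b(g)+\sum_{i>g}\alpha_i b(i)\] for some $\alpha_i\in\mathbf{F}_3$. In particular $e_{m,g}\neq0$ in $S_\mathbf{F}(\lambda)$ if and only if $g\le\lambda_2$.
   Context: $S_\mathbf{F}(\lambda)=\operatorname{End}_{\mathbf{F}S_r}(M^\lambda)$ is a commutative $\mathbf{F}$-algebra with basis $b(0)=\mathbf{1},\dots,b(\lambda_2)$ and multiplication $b(i)b(j)=\sum_{h=\max\{i,j\}}^{i+j}\binom{h}{i}\binom{h}{j}\binom{m+i+j}{i+j-h}b(h)$, $b(a)=0$ for $a>\lambda_2$. $B(m,g)=\binom{m+2g}{g}$. With base-3 digits $(m+2g)_u,g_u$, let $I^{(0)}=\{u: g_u=0,(m+2g)_u=0\}$, $J^{(0)}=\{u:g_u=1,(m+2g)_u=2\}$, $I^{(1)}=\{u:g_u=0,(m+2g)_u=1\}$, $J^{(1)}=\{u:g_u=2,(m+2g)_u=2\}$, $I^{(2)}=\{u:g_u=0,(m+2g)_u=2\}$, $J^{(2)}=\{u:g_u=1,(m+2g)_u=1\}$ and \[e_{m,g}=\prod_{u\in I^{(0)}}(\mathbf{1}+b(3^u)-b(2\cdot3^u))\prod_{u\in J^{(0)}}(b(2\cdot3^u)-b(3^u))\prod_{u\in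 I^{(1)}}(\mathbf{1}-b(2\cdot3^u))\prod_{u\in J^{(1)}}b(2\cdot3^u)\prod_{u\in I^{(2)}}(\mathbf{1}-b(3^u)+b(2\cdot3^u))\prod_{u\in J^{(2)}}(b(3^u)-b(2\cdot3^u)),\] with $b(a)=0$ for $a>\lambda_2$. Here $B(m,g)$ is read as an element of $\mathbf{F}_3\subseteq\mathbf{F}$. *)

theory Defs
  imports Main
begin

text \<open>Elements of S_F(lambda) are represented by coefficient functions c :: nat => 'a,
  standing for sum_{i <= l2} c i * b(i); coefficients at indices > l2 are zero
  (b(a) = 0 for a > lambda_2).\<close>

definition sbasis :: "nat \<Rightarrow> nat \<Rightarrow> nat \<Rightarrow> 'a::field" where
  "sbasis l2 a = (\<lambda>j. if j = a \<and> a \<le> l2 then 1 else 0)"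

definition sone :: "nat \<Rightarrow> nat \<Rightarrow> 'a::field" where
  "sone l2 = sbasis l2 0"

definition sadd :: "(nat \<Rightarrow> 'a::field) \<Rightarrow> (nat \<Rightarrow> 'a) \<Rightarrow> nat \<Rightarrow> 'a" where
  "sadd x y = (\<lambda>h. x h + y h)"

definition ssub :: "(nat \<Rightarrow> 'a::field) \<Rightarrow> (nat \<Rightarrow> 'a) \<Rightarrow> nat \<Rightarrow> 'a" where
  "ssub x y = (\<lambda>h. x h - y h)"

text \<open>Structure constant: b(i) b(j) = sum_{h=max i j}^{i+j} C(h,i) C(h,j) C(m+i+j, i+j-h) b(h).\<close>
definition scoef :: "nat \<Rightarrow> nat \<Rightarrow> nat \<Rightarrow> nat \<Rightarrow> nat" where
  "scoef m i j h = (if max i j \<le> h \<and> h \<le> i + j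
      then (h choose i) * (h choose j) * ((m + i + j) choose (i + j - h)) else 0)"

definition smult :: "nat \<Rightarrow> nat \<Rightarrow> (nat \<Rightarrow> 'a::field) \<Rightarrow> (nat \<Rightarrow> 'a) \<Rightarrow> nat \<Rightarrow> 'a" where
  "smult l2 m x y = (\<lambda>h. if h \<le> l2 then
      (\<Sum>i\<le>l2. \<Sum>j\<le>l2. x i * y j * of_nat (scoef m i j h)) else 0)"

definition digit3 :: "nat \<Rightarrow> nat \<Rightarrow> nat" where
  "digit3 n u = n div 3 ^ u mod 3"

definition efactor :: "nat \<Rightarrow> nat \<Rightarrow> nat \<Rightarrow> nat \<Rightarrow> nat \<Rightarrow> 'a::field" where
  "efactor l2 m g u =
    (let gu = digit3 g u; nu = digit3 (m + 2 * g) u;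
         b1 = sbasis l2 (3 ^ u); b2 = sbasis l2 (2 * 3 ^ u); one = sone l2 in
     if gu = 0 \<and> nu = 0 then ssub (sadd one b1) b2
     else if gu = 1 \<and> nu = 2 then ssub b2 b1
     else if gu = 0 \<and> nu = 1 then ssub one b2
     else if gu = 2 \<and> nu = 2 then b2
     else if gu = 0 \<and> nu = 2 then sadd (ssub one b1) b2
     else if gu = 1 \<and> nu = 1 then ssub b1 b2
     else one)"

text \<open>For u >= m + 2g + l2 + 1 we have
  3^u > l2 and both digits are 0, so the factor is 1 + b(3^u) - b(2*3^u) = 1; hence
  the (formally infinite) product equals the finite product over u < m + 2g + l2 + 1.\<close>
definition eelem :: "nat \<Rightarrow> nat \<Rightarrow> nat \<Rightarrow> nat \<Rightarrow> 'a::field" where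
  "eelem l2 m g = foldr (\<lambda>u acc. smult l2 m (efactor l2 m g u) acc)
                     [0..<m + 2 * g + l2 + 1] (sone l2)"

end

theory Submission
  imports Defs "HOL-Computational_Algebra.Polynomial" "HOL-Computational_Algebra.Primes"
begin

text \<open>In characteristic 3, Lucas' theorem shows that b(d 3^k) b(j) = b(d 3^k + j) whenever
  3^(k+1) divides j: adding the two indices involves no carries. Hence the product e_(m,g)
  expands digit by digit, and the coefficient of b(h) is the product over u of the coefficient
  of b(h_u 3^u) in the u-th factor. When g_u \<le> (m+2g)_u, that factor has no terms below
  b(g_u 3^u) and its coefficient there is C((m+2g)_u, g_u) mod 3. The hypothesis
  B(m,g) \<noteq> 0 gives g_u \<le> (m+2g)_u for every u by Lucas' theorem; so for h < g some digit
  of h lies below that of g and the coefficient vanishes, while the coefficient of b(g) is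
  \<Prod>_u C((m+2g)_u, g_u) = B(m,g), again by Lucas' theorem.\<close>

lemma coeff_one_plus_X_power:
  "coeff ([:1, 1:] ^ n :: 'a::comm_semiring_1 poly) i = of_nat (n choose i)"
proof (cases "i \<le> n")
  case True
  then show ?thesis using coeff_linear_poly_power[OF True, of 1 1] by simp
next
  case False
  have "degree ([:1, 1:] ^ n :: 'a poly) \<le> n"
    by (rule order.trans[OF degree_power_le]) (simp add: degree_pCons_le)
  then show ?thesis using False by (simp add: coeff_eq_0 binomial_eq_0)
qed

lemma eq_of_mult_add_bounds:
  fixes q t B s r :: nat
  assumes "s < q" "r < q" "q * t \<le> q * B + s" "q * B + s - q * t \<le> r"
  shows "t = B"
proof -
  have "q * B + s = q * t + (q * B + s - q * t)" using assms(3) by simp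
  moreover have "(q * t + (q * B + s - q * t)) div q = t" using assms(2,4) by simp
  moreover have "(q * B + s) div q = B" using assms(1) by simp
  ultimately show ?thesis by simp
qed

lemma of_nat_choose_prime_power_split:
  fixes A B r s k :: nat
  assumes p: "CHAR('a::comm_semiring_1) = p" "prime p" and r: "r < p ^ k" and s: "s < p ^ k"
  shows "(of_nat ((p ^ k * A + r) choose (p ^ k * B + s)) :: 'a)
          = of_nat (A choose B) * of_nat (r choose s)"
proof -
  \<comment> \<open>Frobenius: (1 + X)^(qA + r) = (1 + X^q)^A (1 + X)^r; compare coefficients of X^(qB + s).\<close>
  define q where "q = p ^ k"
  define X where "X = ([:1, 1:] :: 'a poly)"
  have "X = 1 + monom 1 1" by (simp add: X_def monom_Suc one_pCons)
  then have Xq: "X ^ q = 1 + monom 1 q"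
    using p by (simp add: q_def freshmans_dream' monom_power)
  have "X ^ (q * A + r) = (1 + monom 1 q) ^ A * X ^ r"
    by (simp add: power_add power_mult Xq)
  also have "(1 + monom 1 q) ^ A = (\<Sum>t\<le>A. of_nat (A choose t) * monom 1 (q * t) :: 'a poly)"
    by (subst add.commute, subst binomial_ring) (simp add: monom_power mult.commute)
  finally have "X ^ (q * A + r) = (\<Sum>t\<le>A. smult (of_nat (A choose t)) (monom 1 (q * t) * X ^ r))"
    by (simp add: sum_distrib_right mult.assoc of_nat_mult_conv_smult)
  then have "coeff (X ^ (q * A + r)) (q * B + s) = (\<Sum>t\<le>A. of_nat (A choose t) *
      (if q * B + s < q * t then 0 else of_nat (r choose (q * B + s - q * t))))"
    by (auto simp: coeff_sum coeff_monom_mult X_def coeff_one_plus_X_power intro!: sum.cong)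
  also have "\<dots> = (\<Sum>t\<le>A. if t = B then of_nat (A choose B) * of_nat (r choose s) else 0)"
  proof (rule sum.cong[OF refl])
    fix t
    show "of_nat (A choose t) * (if q * B + s < q * t then 0
        else of_nat (r choose (q * B + s - q * t))) =
        (if t = B then of_nat (A choose B) * of_nat (r choose s) else (0::'a))"
    proof (cases "t = B \<or> q * B + s < q * t")
      case False
      then have "r < q * B + s - q * t"
        using eq_of_mult_add_bounds[of s q r t B] r s unfolding q_def by linarith
      then show ?thesis using False by (simp add: binomial_eq_0)
    qed auto
  qed
  also have "\<dots> = of_nat (A choose B) * of_nat (r choose s)"
    by (simp add: binomial_eq_0)
  finally show ?thesis by (simp add: X_def coeff_one_plus_X_power q_def)
qed

theorem lucas_theorem:
  assumes p: "CHAR('a::comm_semiring_1) = p" "prime p"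
  shows "n < p ^ N \<Longrightarrow> k < p ^ N \<Longrightarrow>
    (of_nat (n choose k) :: 'a) = (\<Prod>u<N. of_nat ((n div p ^ u mod p) choose (k div p ^ u mod p)))"
proof (induction N arbitrary: n k)
  case 0
  then show ?case by simp
next
  case (Suc N)
  have p0: "p > 0" using p(2) by (simp add: prime_gt_0_nat)
  have "(of_nat (n choose k) :: 'a) = of_nat ((p ^ 1 * (n div p) + n mod p) choose (p ^ 1 * (k div p) + k mod p))"
    by simp
  also have "\<dots> = of_nat ((n div p) choose (k div p)) * of_nat ((n mod p) choose (k mod p))"
    using p p0 by (intro of_nat_choose_prime_power_split) auto
  also have "of_nat ((n div p) choose (k div p)) =
      (\<Prod>u<N. (of_nat ((n div p div p ^ u mod p) choose (k div p div p ^ u mod p)) :: 'a))"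
    using Suc.prems p0 by (intro Suc.IH) (auto simp: less_mult_imp_div_less mult.commute)
  finally show ?case
    unfolding prod.lessThan_Suc_shift by (simp add: div_mult2_eq mult.commute)
qed

lemma prime_3_nat: "prime (3::nat)"
  by (simp add: prime_nat_iff' atLeastLessThan_nat_numeral)

lemma digit3_0: "digit3 n 0 = n mod 3"
  by (simp add: digit3_def)

lemma digit3_Suc: "digit3 n (Suc u) = digit3 (n div 3) u"
  by (simp add: digit3_def div_mult2_eq mult.commute)

lemma digit3_less: "digit3 n u < 3"
  by (simp add: digit3_def)

lemma digit3_eq_0: "n < 3 ^ u \<Longrightarrow> digit3 n u = 0"
  by (simp add: digit3_def)

lemma ex_digit3_less: "(h::nat) < g \<Longrightarrow> \<exists>u. digit3 h u < digit3 g u"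
proof (induction g arbitrary: h rule: less_induct)
  case (less g)
  show ?case
  proof (cases "h div 3 < g div 3")
    case True
    then have "g div 3 < g" using less.prems by simp
    from less.IH[OF this True] show ?thesis by (metis digit3_Suc)
  next
    case False
    then have "h div 3 = g div 3" using less.prems div_le_mono by (metis le_antisym less_imp_le_nat not_less)
    then have "h mod 3 < g mod 3" using less.prems by (metis div_mult_mod_eq add_less_cancel_left)
    then show ?thesis by (metis digit3_0)
  qed
qed

lemma digit3_sub_low_digit:
  assumes "3 ^ k dvd (h::nat)" "k < u"
  shows "digit3 (h - digit3 h k * 3 ^ k) u = digit3 h u"
proof -
  have "digit3 h k * 3 ^ k = h mod 3 ^ Suc k"
    unfolding digit3_def power_Suc2 using mod_mult2_eq[of h "3 ^ k" 3] assms(1)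
    by (simp add: mult.commute)
  moreover obtain t where "u = Suc k + t" using assms(2) less_imp_Suc_add by blast
  ultimately show ?thesis
    by (simp add: digit3_def minus_mod_eq_mult_div power_add div_mult2_eq)
qed

corollary lucas_theorem_digit3:
  assumes "CHAR('a::comm_semiring_1) = 3" "n < 3 ^ N" "k < 3 ^ N"
  shows "(of_nat (n choose k) :: 'a) = (\<Prod>u<N. of_nat (digit3 n u choose digit3 k u))"
  using lucas_theorem[OF assms(1) prime_3_nat assms(2,3)] by (simp add: digit3_def)

lemma digit3_le_of_choose_nonzero:
  assumes c: "CHAR('a::comm_semiring_1) = 3" and nz: "(of_nat (n choose k) :: 'a) \<noteq> 0"
  shows "digit3 k u \<le> digit3 n u"
proof (rule ccontr)
  define N where "N = n + k + u + 1"
  assume "\<not> ?thesis"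
  then have "(of_nat (digit3 n u choose digit3 k u) :: 'a) = 0" by (simp add: binomial_eq_0)
  moreover have "u < N" by (simp add: N_def)
  ultimately have "(\<Prod>u<N. (of_nat (digit3 n u choose digit3 k u) :: 'a)) = 0"
    by (intro prod_zero) auto
  moreover have "n < 3 ^ N" "k < 3 ^ N"
    using power_gt_expt[of 3 N] by (auto simp: N_def)
  ultimately show False using lucas_theorem_digit3[OF c] nz by metis
qed

lemma scoef_digit_mult:
  assumes c: "CHAR('a::comm_semiring_1) = p" "prime p" and d: "d < p" and j: "p ^ Suc k dvd j"
  shows "(of_nat (scoef m (d * p ^ k) j h) :: 'a) = (if h = d * p ^ k + j then 1 else 0)"
proof (cases "d = 0 \<or> \<not> (max (d * p ^ k) j \<le> h \<and> h \<le> d * p ^ k + j)")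
  case True
  then show ?thesis by (auto simp: scoef_def)
next
  case False
  define i where "i = d * p ^ k"
  define r where "r = h - j"
  obtain a where a: "j = p ^ Suc k * a" using j by blast
  have "i < p ^ Suc k" using d by (simp add: i_def)
  moreover have h: "h = p ^ Suc k * a + r" and "r \<le> i" using False by (auto simp: r_def a i_def)
  ultimately have r: "r < p ^ Suc k" by simp
  have "(of_nat (h choose i) :: 'a) = of_nat (r choose i)"
    using of_nat_choose_prime_power_split[OF c r \<open>i < p ^ Suc k\<close>, of a 0] by (simp add: h)
  moreover have "(of_nat (h choose j) :: 'a) = 1"
    using of_nat_choose_prime_power_split[OF c r, of 0 a a] c by (simp add: h a prime_gt_0_nat)
  moreover have "h = i + j \<longleftrightarrow> r = i" using h a by auto
  ultimately show ?thesis
    using False \<open>r \<le> i\<close> by (auto simp: scoef_def i_def[symmetric] binomial_eq_0)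
qed

text \<open>Entry d of the list is the coefficient of b(d 3^u) in the factor of e_(m,g) at a digit
  position with g_u = gu and (m+2g)_u = nu.\<close>

definition efactor_coeff :: "nat \<Rightarrow> nat \<Rightarrow> nat \<Rightarrow> int" where
  "efactor_coeff gu nu d =
    (if gu = 0 \<and> nu = 0 then [1, 1, -1] ! d
     else if gu = 1 \<and> nu = 2 then [0, -1, 1] ! d
     else if gu = 0 \<and> nu = 1 then [1, 0, -1] ! d
     else if gu = 2 \<and> nu = 2 then [0, 0, 1] ! d
     else if gu = 0 \<and> nu = 2 then [1, -1, 1] ! d
     else if gu = 1 \<and> nu = 1 then [0, 1, -1] ! d
     else [1, 0, 0] ! d)"

lemma efactor_eq_coeff:
  "(efactor l2 m g u i :: 'a::field) = (if i \<le> l2 \<and> 3 ^ u dvd i \<and> i div 3 ^ u < 3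
      then of_int (efactor_coeff (digit3 g u) (digit3 (m + 2 * g) u) (i div 3 ^ u)) else 0)"
proof -
  have "i = 0 \<or> i = 3 ^ u \<or> i = 2 * 3 ^ u \<or> \<not> (3 ^ u dvd i \<and> i div 3 ^ u < 3)"
    by (auto simp: less_Suc_eq numeral_3_eq_3 elim!: dvdE)
  moreover have "3 ^ u \<noteq> (0::nat)" "2 * 3 ^ u \<noteq> (0::nat)" "2 * 3 ^ u \<noteq> (3::nat) ^ u" by auto
  ultimately show ?thesis
    by (auto simp: efactor_def Let_def sbasis_def sone_def sadd_def ssub_def efactor_coeff_def)
qed

lemma efactor_coeff_eq_0_below: "gu \<le> nu \<Longrightarrow> nu < 3 \<Longrightarrow> d < gu \<Longrightarrow> efactor_coeff gu nu d = 0"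
  by (auto simp: efactor_coeff_def less_Suc_eq numeral_3_eq_3 numeral_2_eq_2)

lemma of_int_efactor_coeff_diag:
  assumes "CHAR('a::comm_ring_1) = 3" "gu < 3" "nu < 3"
  shows "(of_int (efactor_coeff gu nu gu) :: 'a) = of_nat (nu choose gu)"
proof -
  have "(2::'a) = of_nat 3 - 1" by simp
  also have "of_nat 3 = (0::'a)" using assms(1) by (metis of_nat_CHAR)
  finally have "(2::'a) = -1" by simp
  then show ?thesis
    using assms(2,3) by (auto simp: efactor_coeff_def less_Suc_eq numeral_3_eq_3 numeral_2_eq_2)
qed

lemma smult_eq_convolution:
  fixes x y :: "nat \<Rightarrow> 'a::field"
  assumes h: "h \<le> l2"
    and scoef: "\<And>i j. x i \<noteq> 0 \<Longrightarrow> y j \<noteq> 0 \<Longrightarrow>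
      (of_nat (scoef m i j h) :: 'a) = (if h = i + j then 1 else 0)"
  shows "Defs.smult l2 m x y h = (\<Sum>i\<le>h. x i * y (h - i))"
proof -
  have "x i * y j * of_nat (scoef m i j h) = (if h = i + j then x i * y j else 0)" for i j
    using scoef[of i j] by (cases "x i = 0 \<or> y j = 0") auto
  then have "Defs.smult l2 m x y h = (\<Sum>i\<le>l2. \<Sum>j\<le>l2. if h = i + j then x i * y j else 0)"
    using h by (simp add: Defs.smult_def)
  also have "\<dots> = (\<Sum>i\<le>l2. if i \<le> h then x i * y (h - i) else 0)"
  proof (rule sum.cong[OF refl])
    fix i
    have "(\<Sum>j\<le>l2. if h = i + j then x i * y j else 0) =
        (\<Sum>j\<le>l2. if i \<le> h \<and> j = h - i then x i * y j else 0)"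
      by (rule sum.cong) auto
    then show "(\<Sum>j\<le>l2. if h = i + j then x i * y j else 0) = (if i \<le> h then x i * y (h - i) else 0)"
      using h by (cases "i \<le> h") auto
  qed
  also have "\<dots> = (\<Sum>i\<in>{i\<in>{..l2}. i \<le> h}. x i * y (h - i))"
    by (rule sum.inter_filter[symmetric]) simp
  also have "{i\<in>{..l2}. i \<le> h} = {..h}" using h by auto
  finally show ?thesis .
qed

lemma smult_digit_factor:
  assumes c: "CHAR('a::field) = 3"
    and x: "\<And>i. x i = (if i \<le> l2 \<and> 3 ^ k dvd i \<and> i div 3 ^ k < 3 then X (i div 3 ^ k) else (0::'a))"
    and y: "\<And>j. y j = (if j \<le> l2 \<and> 3 ^ Suc k dvd j then Y j else (0::'a))"
  shows "Defs.smult l2 m x y h = (if h \<le> l2 \<and> 3 ^ k dvd h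
            then X (digit3 h k) * Y (h - digit3 h k * 3 ^ k) else 0)"
proof (cases "h \<le> l2")
  case False
  then show ?thesis by (simp add: Defs.smult_def)
next
  case hl: True
  define i0 where "i0 = h mod 3 ^ Suc k"
  have i0: "i0 = digit3 h k * 3 ^ k + h mod 3 ^ k"
    unfolding i0_def digit3_def power_Suc2 using mod_mult2_eq[of h "3 ^ k" 3] by (simp add: mult.commute)
  have "Defs.smult l2 m x y h = (\<Sum>i\<le>h. x i * y (h - i))"
  proof (rule smult_eq_convolution[OF hl])
    fix i j
    assume "x i \<noteq> 0" "y j \<noteq> 0"
    then have "i = (i div 3 ^ k) * 3 ^ k" "i div 3 ^ k < 3" "3 ^ Suc k dvd j"
      using x[of i] y[of j] by (auto split: if_splits)
    then show "(of_nat (scoef m i j h) :: 'a) = (if h = i + j then 1 else 0)"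
      using scoef_digit_mult[OF c prime_3_nat, of "i div 3 ^ k" k j m h] by simp
  qed
  also have "\<dots> = (\<Sum>i\<le>h. if i = i0 then x i0 * y (h - i0) else 0)"
  proof (rule sum.cong[OF refl])
    fix i
    assume "i \<in> {..h}"
    moreover have "i = i0" if "x i \<noteq> 0" "y (h - i) \<noteq> 0" "i \<le> h"
    proof -
      have i: "i = (i div 3 ^ k) * 3 ^ k" "i div 3 ^ k < 3" and "3 ^ Suc k dvd h - i"
        using that x[of i] y[of "h - i"] by (auto split: if_splits)
      have "i div 3 ^ k * 3 ^ k < 3 * 3 ^ k" using i(2) by simp
      then have "i < 3 ^ Suc k" using i(1) by (metis power_Suc)
      moreover have "h = (h - i) + i" using that(3) by simp
      ultimately show ?thesis
        unfolding i0_def using \<open>3 ^ Suc k dvd h - i\<close> by (metis mod_add_left_eq dvd_imp_mod_0 add_0 mod_less)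
    qed
    ultimately show "x i * y (h - i) = (if i = i0 then x i0 * y (h - i0) else 0)" by auto
  qed
  also have "\<dots> = x i0 * y (h - i0)" by (simp add: i0_def)
  also have "\<dots> = (if 3 ^ k dvd h then X (digit3 h k) * Y (h - digit3 h k * 3 ^ k) else 0)"
  proof (cases "3 ^ k dvd h")
    case True
    then have "i0 = digit3 h k * 3 ^ k" using i0 by simp
    moreover have "i0 \<le> h" "3 ^ Suc k dvd h - i0"
      by (simp_all add: i0_def minus_mod_eq_mult_div)
    ultimately show ?thesis using True hl x[of i0] y[of "h - i0"] digit3_less[of h k] by simp
  next
    case False
    then have "\<not> 3 ^ k dvd i0"
      using i0 by (simp add: dvd_add_right_iff dvd_eq_mod_eq_0)
    then show ?thesis using False x[of i0] by simp
  qed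
  finally show ?thesis using hl by simp
qed

lemma foldr_efactor_eq:
  assumes c: "CHAR('a::field) = 3" and l2: "l2 < 3 ^ N" and "k \<le> N"
  shows "(foldr (\<lambda>u acc. Defs.smult l2 m (efactor l2 m g u) acc) [k..<N] (sone l2) :: nat \<Rightarrow> 'a) h
    = (if h \<le> l2 \<and> 3 ^ k dvd h then
        of_int (\<Prod>u\<in>{k..<N}. efactor_coeff (digit3 g u) (digit3 (m + 2 * g) u) (digit3 h u)) else 0)"
  using \<open>k \<le> N\<close>
proof (induction k arbitrary: h rule: inc_induct)
  case base
  have "h \<le> l2 \<and> 3 ^ N dvd h \<longleftrightarrow> h = 0"
    using l2 by (auto dest: dvd_imp_le)
  then show ?case by (auto simp: sone_def sbasis_def)
next
  case (step k)
  define X where "X d = (of_int (efactor_coeff (digit3 g k) (digit3 (m + 2 * g) k) d) :: 'a)" for d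
  define Y where "Y j = (of_int (\<Prod>u\<in>{Suc k..<N}.
      efactor_coeff (digit3 g u) (digit3 (m + 2 * g) u) (digit3 j u)) :: 'a)" for j
  have "[k..<N] = k # [Suc k..<N]" using step(2) by (simp add: upt_conv_Cons)
  then have "(foldr (\<lambda>u acc. Defs.smult l2 m (efactor l2 m g u) acc) [k..<N] (sone l2) :: nat \<Rightarrow> 'a) h
      = Defs.smult l2 m (efactor l2 m g k)
          (foldr (\<lambda>u acc. Defs.smult l2 m (efactor l2 m g u) acc) [Suc k..<N] (sone l2)) h"
    by simp
  also have "\<dots> = (if h \<le> l2 \<and> 3 ^ k dvd h then X (digit3 h k) * Y (h - digit3 h k * 3 ^ k) else 0)"
    by (rule smult_digit_factor[OF c]) (auto simp: efactor_eq_coeff X_def Y_def step.IH)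
  also have "\<dots> = (if h \<le> l2 \<and> 3 ^ k dvd h then
      of_int (\<Prod>u\<in>{k..<N}. efactor_coeff (digit3 g u) (digit3 (m + 2 * g) u) (digit3 h u)) else 0)"
  proof (cases "h \<le> l2 \<and> 3 ^ k dvd h")
    case True
    then have "Y (h - digit3 h k * 3 ^ k) = of_int (\<Prod>u\<in>{Suc k..<N}.
        efactor_coeff (digit3 g u) (digit3 (m + 2 * g) u) (digit3 h u))"
      unfolding Y_def by (auto intro!: arg_cong[where f = of_int] prod.cong simp: digit3_sub_low_digit)
    moreover have "{k..<N} = insert k {Suc k..<N}" using step(2) by auto
    ultimately show ?thesis using True by (simp add: X_def)
  qed auto
  finally show ?case .
qed

lemma eelem_eq_prod:
  assumes "CHAR('a::field) = 3"
  shows "(eelem l2 m g :: nat \<Rightarrow> 'a) h = (if h \<le> l2 then of_int (\<Prod>u<m + 2 * g + l2 + 1.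
      efactor_coeff (digit3 g u) (digit3 (m + 2 * g) u) (digit3 h u)) else 0)"
  using foldr_efactor_eq[OF assms, of l2 "m + 2 * g + l2 + 1" 0] power_gt_expt[of 3 "m + 2 * g + l2 + 1"]
  by (simp add: eelem_def atLeast0LessThan)

lemma eelem_in_range_of_int:
  assumes "CHAR('a::field) = 3"
  shows "(eelem l2 m g :: nat \<Rightarrow> 'a) h \<in> range of_int"
  using eelem_eq_prod[OF assms, of l2 m g h] by (metis of_int_0 rangeI)

lemma eelem_eq_0_above:
  assumes "CHAR('a::field) = 3" "l2 < h"
  shows "(eelem l2 m g :: nat \<Rightarrow> 'a) h = 0"
  using assms by (simp add: eelem_eq_prod)

lemma eelem_diag:
  assumes c: "CHAR('a::field) = 3" and "g \<le> l2"
  shows "(eelem l2 m g :: nat \<Rightarrow> 'a) g = of_nat ((m + 2 * g) choose g)"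
proof -
  define N where "N = m + 2 * g + l2 + 1"
  have "m + 2 * g < 3 ^ N" "g < 3 ^ N" using power_gt_expt[of 3 N] by (auto simp: N_def)
  have "(eelem l2 m g :: nat \<Rightarrow> 'a) g =
      (\<Prod>u<N. of_int (efactor_coeff (digit3 g u) (digit3 (m + 2 * g) u) (digit3 g u)))"
    unfolding eelem_eq_prod[OF c] N_def[symmetric] using assms(2) by simp
  also have "\<dots> = (\<Prod>u<N. of_nat (digit3 (m + 2 * g) u choose digit3 g u))"
    using of_int_efactor_coeff_diag[OF c digit3_less digit3_less] by simp
  also have "\<dots> = of_nat ((m + 2 * g) choose g)"
    using lucas_theorem_digit3[OF c \<open>m + 2 * g < 3 ^ N\<close> \<open>g < 3 ^ N\<close>] by simp
  finally show ?thesis .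
qed

lemma eelem_eq_0_below:
  assumes c: "CHAR('a::field) = 3" and B: "(of_nat ((m + 2 * g) choose g) :: 'a) \<noteq> 0" and "h < g"
  shows "(eelem l2 m g :: nat \<Rightarrow> 'a) h = 0"
proof -
  define N where "N = m + 2 * g + l2 + 1"
  obtain u where u: "digit3 h u < digit3 g u" using ex_digit3_less[OF \<open>h < g\<close>] by blast
  have "u < N"
  proof (rule ccontr)
    assume "\<not> u < N"
    then have "g < 3 ^ u" using power_gt_expt[of 3 u] by (simp add: N_def)
    then show False using u by (simp add: digit3_eq_0)
  qed
  moreover have "efactor_coeff (digit3 g u) (digit3 (m + 2 * g) u) (digit3 h u) = 0"
    using efactor_coeff_eq_0_below digit3_le_of_choose_nonzero[OF c B] digit3_less u by blast
  ultimately have vanish: "(\<Prod>u<N. efactor_coeff (digit3 g u) (digit3 (m + 2 * g) u) (digit3 h u)) = 0"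
    by (intro prod_zero) auto
  show ?thesis unfolding eelem_eq_prod[OF c] N_def[symmetric] vanish by simp
qed

theorem lemma3p3:
  fixes l1 l2 g :: nat
  assumes char3: "CHAR('a::field) = 3"
    and part: "l2 \<le> l1"
    and B: "\<not> (3::nat) dvd ((l1 - l2 + 2 * g) choose g)"
  shows "(\<exists>\<alpha> :: nat \<Rightarrow> 'a. (\<forall>i. \<alpha> i \<in> range of_int) \<and>
            (\<forall>h. (eelem l2 (l1 - l2) g :: nat \<Rightarrow> 'a) h =
                 of_nat ((l1 - l2 + 2 * g) choose g) * sbasis l2 g h
                 + (\<Sum>i\<in>{g<..l2}. \<alpha> i * sbasis l2 i h)))
       \<and> ((eelem l2 (l1 - l2) g :: nat \<Rightarrow> 'a) \<noteq> (\<lambda>_. 0) \<longleftrightarrow> g \<le> l2)"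
proof -
  let ?B = "(l1 - l2 + 2 * g) choose g"
  let ?e = "eelem l2 (l1 - l2) g :: nat \<Rightarrow> 'a"
  have B': "(of_nat ?B :: 'a) \<noteq> 0" using B char3 by (simp add: of_nat_eq_0_iff_char_dvd)
  have expansion: "?e h = of_nat ?B * sbasis l2 g h + (\<Sum>i\<in>{g<..l2}. ?e i * sbasis l2 i h)" for h
  proof -
    have "(\<Sum>i\<in>{g<..l2}. ?e i * sbasis l2 i h) = (\<Sum>i\<in>{g<..l2}. if h = i then ?e h else 0)"
      by (rule sum.cong) (auto simp: sbasis_def)
    then show ?thesis
      using eelem_eq_0_above[OF char3] eelem_eq_0_below[OF char3 B'] eelem_diag[OF char3]
      by (cases h g rule: linorder_cases) (auto simp: sbasis_def)
  qed
  have "?e \<noteq> (\<lambda>_. 0) \<longleftrightarrow> g \<le> l2"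
    using eelem_eq_0_above[OF char3] eelem_eq_0_below[OF char3 B'] eelem_diag[OF char3] B'
    by (metis leI le_less_trans)
  then show ?thesis
    using expansion eelem_in_range_of_int[OF char3] by blast
qed

end
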